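(* Let $G$ be a finite abelian group and let $\rho\ge4$ be an integer. If $A$ is a generating set for $G$ such that $\operatorname{diam}^+_A(G)\ge\rho$ and $|A|>\frac{3}{2\rho}|G|$, then there exist a subgroup $H\le G$ and an element $g\in G$ such that: (i) $A\subseteq H\cup(g+H)$ and $|A|>\left(2-\frac{\rho-3}{2\rho}\right)|H|$; (ii) $G/H$ is cyclic, $\rho+1\le|G/H|<\frac43\rho$, and $g+H$ generates $G/H$.
   Context: Groups are written additively. For $A\subseteq G$ let $A_0:=A\cup\{0\}$ and $\langle A\rangle^+_\rho:=\rho A_0=\{a_1+\dots+a_\rho:a_i\in A_0\}$. $\operatorname{diam}^+_A(G):=\min\{\rho\in\mathbb{N}_0:\langle A\rangle^+_\rho=G\}$ ($\min\varnothing=\infty$). *)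

theory Defs
  imports Main "HOL-Library.Extended_Nat"
begin

text \<open>The ambient finite abelian group G is the universe of a type 'a :: {finite, ab_group_add}.\<close>

definition add_subgroup :: "'a::ab_group_add set \<Rightarrow> bool" where
  "add_subgroup H \<longleftrightarrow> 0 \<in> H \<and> (\<forall>x\<in>H. \<forall>y\<in>H. x + y \<in> H) \<and> (\<forall>x\<in>H. - x \<in> H)"

definition gen_subgroup :: "'a::ab_group_add set \<Rightarrow> 'a set" where
  "gen_subgroup S = \<Inter>{H. add_subgroup H \<and> S \<subseteq> H}"

fun sumset_pow :: "'a::ab_group_add set \<Rightarrow> nat \<Rightarrow> 'a set" where
  "sumset_pow A 0 = {0}"
| "sumset_pow A (Suc n) = {a + b | a b. a \<in> insert 0 A \<and> b \<in> sumset_pow A n}"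

definition diam_plus :: "'a::ab_group_add set \<Rightarrow> enat" where
  "diam_plus A = (if \<exists>r. sumset_pow A r = UNIV
                  then enat (LEAST r. sumset_pow A r = UNIV) else \<infinity>)"

definition coset :: "'a::ab_group_add \<Rightarrow> 'a set \<Rightarrow> 'a set" where
  "coset g H = (\<lambda>h. g + h) ` H"

definition quotient_cosets :: "'a::ab_group_add set \<Rightarrow> 'a set set" where
  "quotient_cosets H = (\<lambda>x. coset x H) ` UNIV"

text \<open>The coset g+H generates G/H: the subgroup of G/H generated by g+H is all of G/H,
  equivalently its preimage, the subgroup of G generated by g and H, is G.\<close>
definition coset_generates :: "'a::ab_group_add \<Rightarrow> 'a set \<Rightarrow> bool" where
  "coset_generates g H \<longleftrightarrow> gen_subgroup (insert g H) = UNIV"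

definition quotient_cyclic :: "'a::ab_group_add set \<Rightarrow> bool" where
  "quotient_cyclic H \<longleftrightarrow> (\<exists>c. coset_generates c H)"

end

(* Put B = A \<union> {0} and let \<kappa> be the least value of |X + B| - |X| over the nonempty X with
   X + B \<noteq> G.  Hamidoune's atom argument (two intersecting atoms coincide, and translates of
   atoms are atoms) shows that \<kappa> is attained by a subgroup H.  Each step of the chain
   B \<subseteq> 2B \<subseteq> ... \<subseteq> (\<rho>-1)B \<noteq> G gains at least \<kappa> elements, and for y \<notin> (\<rho>-1)B the set y - B
   misses (\<rho>-2)B, so |G| \<ge> 2|B| + (\<rho>-3)\<kappa>.  With |B| > 3|G|/(2\<rho>) this gives \<rho>\<kappa> < |G| and
   3\<kappa> < 2|B|, hence |H + B| < 3|H|: B lies in H and a single further coset g + H, which exists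
   because A generates G.  Then \<kappa> = |H|, so [G:H] > \<rho>, while |A| \<le> 2|H| gives [G:H] < 4\<rho>/3. *)

theory Submission
  imports Defs "HOL-Library.Set_Algebras"
begin

lemma add_subgroupD:
  assumes "add_subgroup H"
  shows "0 \<in> H" and "x \<in> H \<Longrightarrow> y \<in> H \<Longrightarrow> x + y \<in> H"
    and "x \<in> H \<Longrightarrow> y \<in> H \<Longrightarrow> x - y \<in> H"
  using assms unfolding add_subgroup_def
  by (auto simp del: add_uminus_conv_diff simp: diff_conv_add_uminus)

lemma add_subgroupI_diff:
  assumes zero: "0 \<in> H" and diff: "\<And>x y. x \<in> H \<Longrightarrow> y \<in> H \<Longrightarrow> x - y \<in> H"
  shows "add_subgroup H"
proof -
  have neg: "- x \<in> H" if "x \<in> H" for x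
    using diff[OF zero that] by simp
  have "x + y \<in> H" if "x \<in> H" "y \<in> H" for x y
    using diff[OF that(1) neg[OF that(2)]] by simp
  then show ?thesis
    using zero neg unfolding add_subgroup_def by blast
qed

lemma gen_subgroup_eq_UNIV_iff:
  "gen_subgroup S = UNIV \<longleftrightarrow> (\<forall>K. add_subgroup K \<longrightarrow> S \<subseteq> K \<longrightarrow> K = UNIV)"
  unfolding gen_subgroup_def by blast

lemma card_add_card_le_if_sumset_ne_UNIV:
  fixes X B :: "'a::{finite, ab_group_add} set"
  assumes "X + B \<noteq> UNIV"
  shows "card X + card B \<le> card (UNIV :: 'a set)"
proof -
  obtain y where y: "y \<notin> X + B" using assms by blast
  define Y where "Y = (\<lambda>b. y - b) ` B"
  have "card Y = card B"
    unfolding Y_def by (rule card_image) (simp add: inj_on_def)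
  moreover have "X \<inter> Y = {}"
  proof (rule ccontr)
    assume "X \<inter> Y \<noteq> {}"
    then obtain b where "b \<in> B" "y - b \<in> X" unfolding Y_def by blast
    then have "(y - b) + b \<in> X + B" by blast
    then show False using y by simp
  qed
  then have "card X + card Y = card (X \<union> Y)"
    by (simp add: card_Un_disjoint)
  moreover have "card (X \<union> Y) \<le> card (UNIV :: 'a set)"
    by (rule card_mono) auto
  ultimately show ?thesis by linarith
qed

lemma card_sumset_Un_Int_le:
  fixes X Y B :: "'a::{finite, ab_group_add} set"
  shows "card ((X \<union> Y) + B) + card ((X \<inter> Y) + B) \<le> card (X + B) + card (Y + B)"
proof -
  have "card ((X \<inter> Y) + B) \<le> card ((X + B) \<inter> (Y + B))"
    by (intro card_mono Int_greatest set_plus_mono2) auto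
  moreover have "card ((X + B) \<union> (Y + B)) + card ((X + B) \<inter> (Y + B)) = card (X + B) + card (Y + B)"
    by (rule card_Un_Int[symmetric]) simp_all
  ultimately show ?thesis
    by (simp only: Un_set_plus)
qed

section \<open>Hamidoune's isoperimetric method\<close>

(* connectivity B is Hamidoune's \<kappa>(B); its minimum ranges over an empty set exactly when
   B = UNIV, so every use below comes with a set X such that X + B \<noteq> UNIV. *)

definition boundary_size :: "'a::ab_group_add set \<Rightarrow> 'a set \<Rightarrow> int" where
  "boundary_size B X = int (card (X + B)) - int (card X)"

definition connectivity :: "'a::ab_group_add set \<Rightarrow> int" where
  "connectivity B = Min (boundary_size B ` {X. X \<noteq> {} \<and> X + B \<noteq> UNIV})"

definition fragment :: "'a::ab_group_add set \<Rightarrow> 'a set \<Rightarrow> bool" where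
  "fragment B X \<longleftrightarrow> X \<noteq> {} \<and> X + B \<noteq> UNIV \<and> boundary_size B X = connectivity B"

definition atom :: "'a::ab_group_add set \<Rightarrow> 'a set \<Rightarrow> bool" where
  "atom B X \<longleftrightarrow> fragment B X \<and> (\<forall>Y. fragment B Y \<longrightarrow> card X \<le> card Y)"

lemma connectivity_le:
  fixes B X :: "'a::{finite, ab_group_add} set"
  assumes "X \<noteq> {}" and "X + B \<noteq> UNIV"
  shows "connectivity B \<le> boundary_size B X"
  unfolding connectivity_def using assms by (intro Min_le) auto

lemma atom_exists:
  fixes B :: "'a::{finite, ab_group_add} set"
  assumes "B \<noteq> UNIV"
  obtains X where "atom B X"
proof -
  have "{0} + B \<noteq> UNIV"
    using assms by simp
  then have "connectivity B \<in> boundary_size B ` {X. X \<noteq> {} \<and> X + B \<noteq> UNIV}"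
    unfolding connectivity_def by (intro Min_in finite_imageI) (simp, blast)
  then obtain F where "F \<noteq> {}" and "F + B \<noteq> UNIV" and "connectivity B = boundary_size B F"
    by (auto elim!: imageE)
  then have "fragment B F"
    by (simp add: fragment_def)
  then obtain X where "fragment B X" and "\<forall>Y. fragment B Y \<longrightarrow> card X \<le> card Y"
    using ex_has_least_nat[of "fragment B" F card] by blast
  then show ?thesis
    using that unfolding atom_def by blast
qed

lemma fragment_reflect_complement:
  fixes B X :: "'a::{finite, ab_group_add} set"
  assumes X: "fragment B X"
  shows "fragment B (uminus ` (UNIV - (X + B)))"
proof -
  define Y where "Y = uminus ` (UNIV - (X + B))"
  have X_ne: "X \<noteq> {}" and XB: "X + B \<noteq> UNIV" and bX: "boundary_size B X = connectivity B"
    using X unfolding fragment_def by auto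
  have card_Y: "card Y = card (UNIV :: 'a set) - card (X + B)"
    unfolding Y_def by (subst card_image) (simp_all add: inj_on_def card_Diff_subset)
  have YB: "Y + B \<subseteq> UNIV - uminus ` X"
  proof
    fix z assume "z \<in> Y + B"
    then obtain x' b where "x' \<notin> X + B" "b \<in> B" "z = - x' + b"
      unfolding Y_def by (auto elim!: set_plus_elim)
    moreover have "x' = x + b" if "z = - x" for x
      using that \<open>z = - x' + b\<close> by (simp add: algebra_simps eq_neg_iff_add_eq_0)
    ultimately show "z \<in> UNIV - uminus ` X"
      by auto
  qed
  have "card (Y + B) \<le> card (UNIV :: 'a set) - card X"
    using card_mono[OF _ YB] by (simp add: card_Diff_subset card_image inj_on_def)
  moreover have "card (X + B) \<le> card (UNIV :: 'a set)" and "card X \<le> card (UNIV :: 'a set)"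
    by (auto intro: card_mono)
  ultimately have "boundary_size B Y \<le> boundary_size B X"
    using card_Y unfolding boundary_size_def by linarith
  moreover have "Y \<noteq> {}" and "Y + B \<noteq> UNIV"
    using XB X_ne YB unfolding Y_def by auto
  ultimately show ?thesis
    using connectivity_le[of Y B] bX unfolding fragment_def Y_def by auto
qed

lemma card_atom_le_card_Compl_sumset:
  fixes B X Y :: "'a::{finite, ab_group_add} set"
  assumes "atom B X" and "fragment B Y"
  shows "card X \<le> card (UNIV :: 'a set) - card (Y + B)"
proof -
  have "card X \<le> card (uminus ` (UNIV - (Y + B)))"
    using assms fragment_reflect_complement unfolding atom_def by blast
  also have "\<dots> = card (UNIV :: 'a set) - card (Y + B)"
    by (subst card_image) (simp_all add: inj_on_def card_Diff_subset)
  finally show ?thesis .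
qed

lemma fragment_Int:
  fixes B X Y :: "'a::{finite, ab_group_add} set"
  assumes X: "fragment B X" and Y: "fragment B Y"
    and "X \<inter> Y \<noteq> {}" and "(X \<union> Y) + B \<noteq> UNIV"
  shows "fragment B (X \<inter> Y)"
proof -
  have "(X \<inter> Y) + B \<noteq> UNIV"
    using X set_plus_mono2[of "X \<inter> Y" X B B] unfolding fragment_def by blast
  then have "connectivity B \<le> boundary_size B (X \<inter> Y)"
    by (rule connectivity_le[OF assms(3)])
  moreover have "connectivity B \<le> boundary_size B (X \<union> Y)"
    using X assms(4) by (intro connectivity_le) (auto simp: fragment_def)
  moreover have "card (X \<union> Y) + card (X \<inter> Y) = card X + card Y"
    by (rule card_Un_Int[symmetric]) simp_all
  ultimately have "boundary_size B (X \<inter> Y) = connectivity B"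
    using card_sumset_Un_Int_le[of X Y B] X Y
    unfolding fragment_def boundary_size_def by linarith
  then show ?thesis
    using assms(3) \<open>(X \<inter> Y) + B \<noteq> UNIV\<close> unfolding fragment_def by blast
qed

lemma sumset_Un_ne_UNIV_if_atom:
  fixes B X Y :: "'a::{finite, ab_group_add} set"
  assumes X: "atom B X" and Y: "fragment B Y" and XY: "X \<inter> Y \<noteq> {}"
  shows "(X \<union> Y) + B \<noteq> UNIV"
proof
  assume "(X \<union> Y) + B = UNIV"
  then have "card (UNIV :: 'a set) + card ((X \<inter> Y) + B) \<le> card (X + B) + card (Y + B)"
    using card_sumset_Un_Int_le[of X Y B] by simp
  moreover have "(X \<inter> Y) + B \<noteq> UNIV"
    using Y set_plus_mono2[of "X \<inter> Y" Y B B] unfolding fragment_def by blast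
  then have "connectivity B \<le> boundary_size B (X \<inter> Y)"
    by (rule connectivity_le[OF XY])
  moreover have "card (X \<inter> Y) > 0"
    using XY by (simp add: card_gt_0_iff)
  moreover have "card X \<le> card (UNIV :: 'a set) - card (Y + B)"
    using X Y by (rule card_atom_le_card_Compl_sumset)
  moreover have "card (Y + B) \<le> card (UNIV :: 'a set)"
    by (rule card_mono) simp_all
  ultimately show False
    using X unfolding atom_def fragment_def boundary_size_def by linarith
qed

lemma atoms_eq_if_Int_ne:
  fixes B X Y :: "'a::{finite, ab_group_add} set"
  assumes X: "atom B X" and Y: "atom B Y" and XY: "X \<inter> Y \<noteq> {}"
  shows "X = Y"
proof -
  have "fragment B (X \<inter> Y)"
    using X Y XY sumset_Un_ne_UNIV_if_atom[OF X _ XY] by (intro fragment_Int) (auto simp: atom_def)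
  then have "card X \<le> card (X \<inter> Y)" and "card Y \<le> card (X \<inter> Y)"
    using X Y unfolding atom_def by auto
  then have "X \<inter> Y = X" and "X \<inter> Y = Y"
    by (simp_all add: card_seteq)
  then show ?thesis by simp
qed

lemma fragment_translate_iff:
  fixes B X :: "'a::{finite, ab_group_add} set"
  shows "fragment B (X + {t}) \<longleftrightarrow> fragment B X"
proof -
  have shift: "(X + {t}) + B = (X + B) + {t}"
    by (simp only: ac_simps)
  have "S + {t} = UNIV \<longleftrightarrow> S = UNIV" for S :: "'a set"
    using card_plus_sing[of S t] card_subset_eq[of UNIV "S + {t}"] card_subset_eq[of UNIV S]
    by auto
  moreover have "X + {t} = {} \<longleftrightarrow> X = {}"
    by (auto simp: set_plus_def)
  ultimately show ?thesis
    unfolding fragment_def boundary_size_def shift card_plus_sing by simp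
qed

lemma atom_translate:
  fixes B X :: "'a::{finite, ab_group_add} set"
  assumes "atom B X"
  shows "atom B (X + {t})"
proof -
  have "card X \<le> card Y" if "fragment B Y" for Y
  proof -
    have "Y + {- t} + {t} = Y + {- t + t}"
      by (simp only: add.assoc) (simp add: set_plus_def)
    then have "Y + {- t} + {t} = Y"
      by simp
    then have "fragment B (Y + {- t})"
      using that fragment_translate_iff[of B "Y + {- t}" t] by simp
    then show ?thesis
      using assms card_plus_sing[of Y "- t"] unfolding atom_def by auto
  qed
  then show ?thesis
    using assms fragment_translate_iff unfolding atom_def card_plus_sing by blast
qed

lemma atom_add_subgroup:
  fixes B H :: "'a::{finite, ab_group_add} set"
  assumes H: "atom B H" and "0 \<in> H"
  shows "add_subgroup H"
proof (rule add_subgroupI_diff)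
  fix x y assume "x \<in> H" "y \<in> H"
  have "atom B (H + {- y})"
    using H by (rule atom_translate)
  moreover have "0 \<in> H + {- y}"
    using set_plus_intro[OF \<open>y \<in> H\<close>, of "- y" "{- y}"] by simp
  ultimately have "H + {- y} = H"
    using atoms_eq_if_Int_ne[OF _ H] \<open>0 \<in> H\<close> by blast
  then show "x - y \<in> H"
    using set_plus_intro[OF \<open>x \<in> H\<close>, of "- y" "{- y}"] by simp
qed (fact assms)

theorem add_subgroup_fragment_exists:
  fixes B :: "'a::{finite, ab_group_add} set"
  assumes "B \<noteq> UNIV"
  obtains H where "add_subgroup H" and "fragment B H"
proof -
  obtain X where X: "atom B X"
    using atom_exists[OF assms] .
  then obtain x where "x \<in> X"
    unfolding atom_def fragment_def by blast
  have "atom B (X + {- x})"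
    using X by (rule atom_translate)
  moreover have "0 \<in> X + {- x}"
    using set_plus_intro[OF \<open>x \<in> X\<close>, of "- x" "{- x}"] by simp
  ultimately show ?thesis
    using that atom_add_subgroup unfolding atom_def by blast
qed

section \<open>Iterated sumsets\<close>

lemma sumset_pow_Suc_eq_sumset: "sumset_pow A (Suc k) = sumset_pow A k + insert 0 A"
proof -
  have "sumset_pow A (Suc k) = insert 0 A + sumset_pow A k"
    by (simp only: sumset_pow.simps set_plus_def) blast
  then show ?thesis
    by (simp only: add.commute)
qed

lemma sumset_pow_Suc_0: "sumset_pow A (Suc 0) = insert 0 A"
  unfolding sumset_pow_Suc_eq_sumset by simp

lemma zero_in_sumset_pow: "0 \<in> sumset_pow A k"
  by (induction k) force+

lemma sumset_pow_subset_Suc: "sumset_pow A k \<subseteq> sumset_pow A (Suc k)"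
  unfolding sumset_pow_Suc_eq_sumset add.commute[of "sumset_pow A k"]
  by (rule set_zero_plus2) simp

lemma sumset_pow_ne_UNIV_if_less_diam:
  assumes "enat r \<le> diam_plus A" and "k < r"
  shows "sumset_pow A k \<noteq> UNIV"
proof
  assume "sumset_pow A k = UNIV"
  then have "diam_plus A \<le> enat k"
    unfolding diam_plus_def by (auto intro: Least_le)
  then show False
    using assms by (metis enat_ord_simps(1) leD order_trans)
qed

lemma card_sumset_pow_ge:
  fixes A :: "'a::{finite, ab_group_add} set"
  assumes "sumset_pow A (Suc i) \<noteq> UNIV"
  shows "int (card (insert 0 A)) + int i * connectivity (insert 0 A) \<le> int (card (sumset_pow A (Suc i)))"
  using assms
proof (induction i)
  case 0
  show ?case
    unfolding sumset_pow_Suc_0 by simp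
next
  case (Suc i)
  let ?S = "sumset_pow A (Suc i)"
  have "?S \<noteq> UNIV"
    using Suc.prems sumset_pow_subset_Suc[of A "Suc i"] by (metis top.extremum_uniqueI)
  moreover have "connectivity (insert 0 A) \<le> boundary_size (insert 0 A) ?S"
    using zero_in_sumset_pow Suc.prems unfolding sumset_pow_Suc_eq_sumset[of A "Suc i"]
    by (intro connectivity_le) auto
  ultimately show ?case
    using Suc.IH unfolding boundary_size_def sumset_pow_Suc_eq_sumset[of A "Suc i"]
    by (simp add: algebra_simps)
qed

lemma growth_bound_arith:
  fixes r n b c :: int
  assumes "4 \<le> r" and "3 * n < 2 * r * b" and "2 * b + (r - 3) * c \<le> n"
  shows "r * c < n" and "3 * c < 2 * b"
proof -
  have "r * (2 * b + (r - 3) * c) \<le> r * n"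
    using assms(1,3) by (intro mult_left_mono) auto
  then have "(r - 3) * (r * c) < (r - 3) * n"
    using assms(2) by (simp add: algebra_simps)
  then show rc: "r * c < n"
    using assms(1) by (simp add: mult_less_cancel_left)
  have "r * (3 * c) < r * (2 * b)"
    using rc assms(2) by (simp add: algebra_simps)
  then show "3 * c < 2 * b"
    using assms(1) by (simp add: mult_less_cancel_left)
qed

lemma connectivity_bounds:
  fixes A :: "'a::{finite, ab_group_add} set" and \<rho> :: nat
  assumes "4 \<le> \<rho>" and "sumset_pow A (\<rho> - 1) \<noteq> UNIV"
    and "real (card A) > 3 / (2 * real \<rho>) * real (card (UNIV :: 'a set))"
  shows "int \<rho> * connectivity (insert 0 A) < int (card (UNIV :: 'a set))"
    and "3 * connectivity (insert 0 A) < 2 * int (card (insert 0 A))"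
proof -
  define S where "S = sumset_pow A (Suc (\<rho> - 3))"
  have "S + insert 0 A \<noteq> UNIV"
    using assms(1,2) unfolding S_def sumset_pow_Suc_eq_sumset[symmetric]
    by (simp add: Suc_diff_Suc numeral_eq_Suc)
  then have "card S + card (insert 0 A) \<le> card (UNIV :: 'a set)" and "S \<noteq> UNIV"
    using card_add_card_le_if_sumset_ne_UNIV set_zero_plus2[of "insert 0 A" S]
    by (auto simp: add.commute)
  moreover have "int (card (insert 0 A)) + int (\<rho> - 3) * connectivity (insert 0 A) \<le> int (card S)"
    unfolding S_def by (rule card_sumset_pow_ge) (use \<open>S \<noteq> UNIV\<close> S_def in simp)
  ultimately have growth: "2 * int (card (insert 0 A)) + (int \<rho> - 3) * connectivity (insert 0 A)
      \<le> int (card (UNIV :: 'a set))"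
    using assms(1) by (simp add: of_nat_diff)
  have "real (3 * card (UNIV :: 'a set)) < real (2 * \<rho> * card A)"
    using assms(1,3) by (simp add: field_simps)
  then have "3 * card (UNIV :: 'a set) < 2 * \<rho> * card A"
    by (simp only: of_nat_less_iff)
  moreover have "\<rho> * card A \<le> \<rho> * card (insert 0 A)"
    by (intro mult_left_mono card_mono) auto
  ultimately have "int (3 * card (UNIV :: 'a set)) < int (2 * (\<rho> * card (insert 0 A)))"
    by (simp only: mult.assoc of_nat_less_iff)
  then have "3 * int (card (UNIV :: 'a set)) < 2 * int \<rho> * int (card (insert 0 A))"
    by (simp add: mult.assoc)
  then show "int \<rho> * connectivity (insert 0 A) < int (card (UNIV :: 'a set))"
    and "3 * connectivity (insert 0 A) < 2 * int (card (insert 0 A))"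
    using growth_bound_arith[of "int \<rho>"] growth assms(1) by simp_all
qed

section \<open>Cosets\<close>

lemma mem_coset_iff: "x \<in> coset g H \<longleftrightarrow> x - g \<in> H"
proof
  assume "x - g \<in> H"
  then have "g + (x - g) \<in> coset g H"
    unfolding coset_def by blast
  then show "x \<in> coset g H"
    by simp
qed (auto simp: coset_def)

lemma card_coset: "card (coset g H) = card H"
  unfolding coset_def by (rule card_image) (simp add: inj_on_def)

lemma coset_zero: "coset 0 H = H"
  by (simp add: coset_def)

lemma coset_subset_sumset: "b \<in> B \<Longrightarrow> coset b H \<subseteq> H + B"
  unfolding coset_def by (auto simp: add.commute[of b])

lemma coset_Int_coset_eq_empty:
  assumes H: "add_subgroup H" and "x - y \<notin> H"
  shows "coset x H \<inter> coset y H = {}"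
proof (rule ccontr)
  assume "coset x H \<inter> coset y H \<noteq> {}"
  then obtain z where zx: "z - x \<in> H" and zy: "z - y \<in> H"
    by (auto simp: mem_coset_iff)
  have "(z - y) - (z - x) \<in> H"
    by (rule add_subgroupD(3)[OF H zy zx])
  then show False
    using assms(2) by simp
qed

lemma coset_eq_if_mem:
  assumes H: "add_subgroup H" and "x \<in> coset y H"
  shows "coset x H = coset y H"
proof -
  have "x - y \<in> H"
    using assms(2) by (simp add: mem_coset_iff)
  then have "z - x \<in> H \<longleftrightarrow> z - y \<in> H" for z
    using add_subgroupD(2,3)[OF H, of "z - x" "x - y"] add_subgroupD(3)[OF H, of "z - y" "x - y"]
    by auto
  then show ?thesis
    by (auto simp: mem_coset_iff)
qed

lemma card_mult_card_quotient_cosets: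
  fixes H :: "'a::{finite, ab_group_add} set"
  assumes H: "add_subgroup H"
  shows "card H * card (quotient_cosets H) = card (UNIV :: 'a set)"
proof -
  have "x \<in> coset x H" for x
    using add_subgroupD(1)[OF H] by (simp add: mem_coset_iff)
  then have "\<Union>(quotient_cosets H) = UNIV"
    unfolding quotient_cosets_def by blast
  moreover have "card H * card (quotient_cosets H) = card (\<Union>(quotient_cosets H))"
  proof (rule card_partition)
    show "card C = card H" if "C \<in> quotient_cosets H" for C
      using that unfolding quotient_cosets_def by (auto simp: card_coset)
    show "C \<inter> D = {}"
      if C: "C \<in> quotient_cosets H" and D: "D \<in> quotient_cosets H" and "C \<noteq> D" for C D
    proof -
      obtain x y where "C = coset x H" and "D = coset y H"
        using C D unfolding quotient_cosets_def by blast
      then show ?thesis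
        using \<open>C \<noteq> D\<close> coset_eq_if_mem[OF H] by blast
    qed
  qed simp_all
  ultimately show ?thesis
    by simp
qed

lemma subset_two_cosets_if_card_sumset_lt:
  fixes H B :: "'a::{finite, ab_group_add} set"
  assumes H: "add_subgroup H" and "0 \<in> B" and "g \<in> B" and "g \<notin> H"
    and "card (H + B) < 3 * card H"
  shows "B \<subseteq> H \<union> coset g H"
proof
  fix b assume "b \<in> B"
  show "b \<in> H \<union> coset g H"
  proof (rule ccontr)
    assume b: "b \<notin> H \<union> coset g H"
    have "coset g H \<inter> coset 0 H = {}" "coset b H \<inter> coset 0 H = {}" "coset b H \<inter> coset g H = {}"
      using \<open>g \<notin> H\<close> b by (auto intro!: coset_Int_coset_eq_empty[OF H] simp: mem_coset_iff)
    then have disjoint: "coset 0 H \<inter> coset g H = {}" "(coset 0 H \<union> coset g H) \<inter> coset b H = {}"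
      by blast+
    have "coset 0 H \<union> coset g H \<union> coset b H \<subseteq> H + B"
      using coset_subset_sumset \<open>0 \<in> B\<close> \<open>g \<in> B\<close> \<open>b \<in> B\<close> by blast
    then have "card (coset 0 H \<union> coset g H \<union> coset b H) \<le> card (H + B)"
      by (rule card_mono[rotated]) simp
    then show False
      using assms(5) disjoint by (simp add: card_Un_disjoint card_coset)
  qed
qed

lemma sumset_subgroup_eq_two_cosets:
  fixes H B :: "'a::ab_group_add set"
  assumes H: "add_subgroup H" and "0 \<in> B" and "g \<in> B" and "B \<subseteq> H \<union> coset g H"
  shows "H + B = H \<union> coset g H"
proof
  show "H \<union> coset g H \<subseteq> H + B"
    using coset_subset_sumset[of _ B H] \<open>0 \<in> B\<close> \<open>g \<in> B\<close> by (metis Un_least coset_zero)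
  show "H + B \<subseteq> H \<union> coset g H"
  proof
    fix z assume "z \<in> H + B"
    then obtain h b where "z = h + b" "h \<in> H" "b \<in> B"
      by (auto elim: set_plus_elim)
    moreover have "b \<in> coset 0 H \<union> coset g H"
      using assms(4) \<open>b \<in> B\<close> unfolding coset_zero by blast
    ultimately show "z \<in> H \<union> coset g H"
      using add_subgroupD(2)[OF H \<open>h \<in> H\<close>] unfolding mem_coset_iff Un_iff coset_zero[symmetric]
      by (metis add_diff_eq diff_zero)
  qed
qed

lemma coset_generates_if_subset_two_cosets:
  assumes "gen_subgroup A = UNIV" and "A \<subseteq> H \<union> coset g H"
  shows "coset_generates g H"
  unfolding coset_generates_def gen_subgroup_eq_UNIV_iff
proof (intro allI impI)
  fix K assume K: "add_subgroup K" "insert g H \<subseteq> K"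
  then have "coset g H \<subseteq> K"
    unfolding coset_def by (auto intro: add_subgroupD(2))
  then have "A \<subseteq> K"
    using assms(2) K(2) by blast
  then show "K = UNIV"
    using assms(1) K(1) unfolding gen_subgroup_eq_UNIV_iff by blast
qed

lemma subgroup_fragment_two_cosets:
  fixes B H :: "'a::{finite, ab_group_add} set"
  assumes H: "add_subgroup H" and "fragment B H" and "0 \<in> B" and "gen_subgroup B = UNIV"
    and "3 * connectivity B < 2 * int (card B)"
  obtains g where "B \<subseteq> H \<union> coset g H" and "connectivity B = int (card H)"
proof -
  have HB: "H + B \<noteq> UNIV" and conn: "connectivity B = int (card (H + B)) - int (card H)"
    using assms(2) unfolding fragment_def boundary_size_def by auto
  have "H \<subseteq> H + B" and "B \<subseteq> H + B"
    using add_subgroupD(1)[OF H] \<open>0 \<in> B\<close> set_zero_plus2[of B H] set_zero_plus2[of H B]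
    by (auto simp: add.commute)
  then obtain g where g: "g \<in> B" "g \<notin> H"
    using HB H assms(4) unfolding gen_subgroup_eq_UNIV_iff by blast
  have "card B \<le> card (H + B)"
    using \<open>B \<subseteq> H + B\<close> by (rule card_mono[rotated]) simp
  then have "card (H + B) < 3 * card H"
    using assms(5) conn by linarith
  then have two: "B \<subseteq> H \<union> coset g H"
    using subset_two_cosets_if_card_sumset_lt[OF H \<open>0 \<in> B\<close> g] by blast
  then have "card (H + B) = 2 * card H"
    using sumset_subgroup_eq_two_cosets[OF H \<open>0 \<in> B\<close> g(1) two] coset_Int_coset_eq_empty[OF H, of g 0] g(2)
    by (simp add: card_Un_disjoint card_coset coset_zero Int_commute)
  then show ?thesis
    using that two conn by simp
qed

lemma quotient_index_bounds:
  fixes \<rho> h m a :: nat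
  assumes "3 / (2 * real \<rho>) * real (h * m) < real a" and "a \<le> 2 * h" and "\<rho> * h < h * m"
    and "\<rho> > 0"
  shows "\<rho> + 1 \<le> m" and "real m < 4 / 3 * real \<rho>"
    and "(2 - (real \<rho> - 3) / (2 * real \<rho>)) * real h < real a"
proof -
  have "h > 0" and "\<rho> < m"
    using assms(3) by (simp_all add: mult.commute[of h])
  then show "\<rho> + 1 \<le> m"
    by simp
  have "3 * (real m * real h) < 2 * real \<rho> * real a"
    using assms(1,4) by (simp add: field_simps)
  moreover have "2 * real \<rho> * real a \<le> 2 * real \<rho> * (2 * real h)"
    using assms(2) by (intro mult_left_mono) simp_all
  ultimately have "real h * (3 * real m) < real h * (4 * real \<rho>)"
    by (simp add: algebra_simps)
  then show "real m < 4 / 3 * real \<rho>"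
    using \<open>h > 0\<close> by (simp add: mult_less_cancel_left)
  have "(2 - (real \<rho> - 3) / (2 * real \<rho>)) * real h = 3 / (2 * real \<rho>) * ((real \<rho> + 1) * real h)"
    using assms(4) by (simp add: field_simps)
  also have "\<dots> \<le> 3 / (2 * real \<rho>) * (real m * real h)"
    using \<open>\<rho> < m\<close> by (intro mult_left_mono mult_right_mono) simp_all
  also have "\<dots> = 3 / (2 * real \<rho>) * real (h * m)"
    by simp
  finally show "(2 - (real \<rho> - 3) / (2 * real \<rho>)) * real h < real a"
    using assms(1) by linarith
qed

theorem theorem2p10:
  fixes A :: "'a::{finite, ab_group_add} set" and \<rho> :: nat
  assumes "\<rho> \<ge> 4"
    and "gen_subgroup A = UNIV"
    and "diam_plus A \<ge> enat \<rho>"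
    and "real (card A) > 3 / (2 * real \<rho>) * real (card (UNIV :: 'a set))"
  shows "\<exists>H g. add_subgroup H \<and>
           A \<subseteq> H \<union> coset g H \<and>
           real (card A) > (2 - (real \<rho> - 3) / (2 * real \<rho>)) * real (card H) \<and>
           quotient_cyclic H \<and>
           \<rho> + 1 \<le> card (quotient_cosets H) \<and>
           real (card (quotient_cosets H)) < 4 / 3 * real \<rho> \<and>
           coset_generates g H"
proof -
  define B where "B = insert 0 A"
  have S: "sumset_pow A (\<rho> - 1) \<noteq> UNIV"
    using assms(1,3) by (intro sumset_pow_ne_UNIV_if_less_diam) auto
  have "B \<noteq> UNIV"
    using sumset_pow_ne_UNIV_if_less_diam[OF assms(3), of "Suc 0"] assms(1)
    unfolding B_def sumset_pow_Suc_0 by simp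
  note conn = connectivity_bounds[OF assms(1) S assms(4), folded B_def]
  obtain H where H: "add_subgroup H" and "fragment B H"
    using \<open>B \<noteq> UNIV\<close> by (rule add_subgroup_fragment_exists)
  moreover have "gen_subgroup B = UNIV"
    using assms(2) unfolding gen_subgroup_eq_UNIV_iff B_def by blast
  moreover have "0 \<in> B"
    unfolding B_def by simp
  ultimately obtain g where "B \<subseteq> H \<union> coset g H" and conn_H: "connectivity B = int (card H)"
    using subgroup_fragment_two_cosets[OF H \<open>fragment B H\<close> \<open>0 \<in> B\<close> _ conn(2)] by blast
  then have AH: "A \<subseteq> H \<union> coset g H"
    unfolding B_def by blast
  define m where "m = card (quotient_cosets H)"
  have n: "card H * m = card (UNIV :: 'a set)"
    unfolding m_def using H by (rule card_mult_card_quotient_cosets)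
  have "card A \<le> 2 * card H"
    using card_mono[of "H \<union> coset g H" A] AH card_Un_le[of H "coset g H"] by (simp add: card_coset)
  moreover have "\<rho> * card H < card H * m"
    using conn(1) n conn_H by (simp flip: of_nat_mult)
  ultimately have "\<rho> + 1 \<le> m" and "real m < 4 / 3 * real \<rho>"
    and "(2 - (real \<rho> - 3) / (2 * real \<rho>)) * real (card H) < real (card A)"
    using quotient_index_bounds[of \<rho> "card H" m "card A"] assms(1,4) n by simp_all
  moreover have "coset_generates g H"
    using assms(2) AH by (rule coset_generates_if_subset_two_cosets)
  ultimately show ?thesis
    using H AH unfolding m_def quotient_cyclic_def by blast
qed

end
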